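(* Let $f\in C^1([0,1],\mathbb{R})$ satisfy $f(0)=f(1)=0$, $f(s)>0$ for all $s\in(0,1)$, $f'(1)<0$, and suppose there exist $s_0\in(0,1)$, $K\ge 0$, $\alpha>0$ and $r>0$ such that $$f(s)\le r\frac{s}{(1+|\ln s|)^\alpha}\ \text{ for all } s\in(0,1),\qquad f(s)\ge r\frac{s}{(1+|\ln s|)^\alpha}(1-Ks)\ \text{ for all } s\in(0,s_0].$$ Let $u_0:\mathbb{R}\to[0,1]$ be uniformly continuous with $u_0>0$ on $\mathbb{R}$, $\liminf_{x\to-\infty}u_0(x)>0$ and $\lim_{x\to+\infty}u_0(x)=0$. Let $\beta>0$ satisfy $\beta\ge \frac{1}{\alpha+1}$, and assume there exist $x_0>0$ and $\mu>0$ such that $u_0(x)\lesssim e^{-\mu x^\beta}$ for all $x\ge x_0$ (i.e. $u_0(x)\le Ce^{-\mu x^\beta}$ for some constant $C>0$ and all $x\ge x_0$). Let $u$ be the solution of $u_t=u_{xx}+f(u)$ for $t>0$, $x\in\mathbb{R}$, with $u(0,\cdot)=u_0$. Then for every $\lambda\in(0,1)$ there exist positive constants $\Gamma$ and $c$ and a time $T_\lambda$ such that $$\Gamma<\frac{x_\lambda(t)}{t}<c\quad\text{for all } t>T_\lambda.$$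
   Context: For $\lambda\in(0,1)$ and $t\ge 0$, $E_\lambda(t):=\{x\in\mathbb{R}: u(t,x)\ge\lambda\}$ is the upper level set of $u(t,\cdot)$ and $x_\lambda(t):=\sup E_\lambda(t)$. *)

theory Defs
  imports "HOL-Analysis.Analysis"
begin

definition C1_on_unit :: "(real \<Rightarrow> real) \<Rightarrow> (real \<Rightarrow> real) \<Rightarrow> bool" where
  "C1_on_unit f f' \<longleftrightarrow>
     (\<forall>s\<in>{0..1}. (f has_real_derivative f' s) (at s within {0..1})) \<and>
     continuous_on {0..1} f'"

text \<open>Classical solution u(t,x) of u_t = u_xx + f(u) on (0,oo) x R with u(0,.) = u0,
  taking values in [0,1] (the range of f).\<close>
definition is_solution :: "(real \<Rightarrow> real) \<Rightarrow> (real \<Rightarrow> real) \<Rightarrow> (real \<Rightarrow> real \<Rightarrow> real) \<Rightarrow> bool" where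
  "is_solution f u0 u \<longleftrightarrow>
     continuous_on ({0..} \<times> UNIV) (\<lambda>(t, x). u t x) \<and>
     (\<forall>x. u 0 x = u0 x) \<and>
     (\<forall>t\<ge>0. \<forall>x. 0 \<le> u t x \<and> u t x \<le> 1) \<and>
     (\<exists>ut ux uxx.
        continuous_on ({0<..} \<times> UNIV) (\<lambda>(t, x). ut t x) \<and>
        continuous_on ({0<..} \<times> UNIV) (\<lambda>(t, x). uxx t x) \<and>
        (\<forall>t>0. \<forall>x.
           ((\<lambda>s. u s x) has_real_derivative ut t x) (at t) \<and>
           ((\<lambda>y. u t y) has_real_derivative ux t x) (at x) \<and>
           ((\<lambda>y. ux t y) has_real_derivative uxx t x) (at x) \<and>
           ut t x = uxx t x + f (u t x)))"

definition upper_level_set :: "(real \<Rightarrow> real \<Rightarrow> real) \<Rightarrow> real \<Rightarrow> real \<Rightarrow> real set" where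
  "upper_level_set u lv t = {x. u t x \<ge> lv}"

definition level_pos :: "(real \<Rightarrow> real \<Rightarrow> real) \<Rightarrow> real \<Rightarrow> real \<Rightarrow> real" where
  "level_pos u lv t = Sup (upper_level_set u lv t)"

end

theory Submission
  imports Defs "HOL-Real_Asymp.Real_Asymp"
begin

text \<open>Both estimates follow from the comparison principle for \<open>u\<^sub>t = u\<^sub>x\<^sub>x + f(u)\<close>, which is proved
  by the maximum principle applied to the penalised difference \<open>e\<^sup>-\<^sup>M\<^sup>t (p - q) - \<epsilon> (x\<^sup>2 + 3 t)\<close>.
  From below, the front \<open>a(t) H((l + \<Gamma> t - x) / L)\<close> with \<open>H(z) = z\<^sup>3 / (1 + z\<^sup>3)\<close> and an
  amplitude \<open>a(t)\<close> rising to some \<open>\<theta> < 1\<close> is a subsolution once \<open>L\<close> is large and \<open>\<Gamma>\<close> small: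
  near its leading edge diffusion dominates because \<open>H'' \<ge> 3 z\<close>, behind it \<open>f\<close> is bounded below.
  Hence the level \<open>\<lambda>\<close> is reached beyond \<open>\<Gamma> t / 2\<close>.
  From above, \<open>A exp (- \<mu> (x - c t)\<^sub>+\<^sup>b)\<close> with \<open>b = min \<beta> 1\<close> is a supersolution: by
  \<open>b (1 + \<alpha>) \<ge> 1\<close> the logarithmic damping in \<open>f(s) \<le> r s / (1 + |ln s|)\<^sup>\<alpha>\<close> turns the
  reaction term into \<open>O(\<sigma>\<^sup>b\<^sup>-\<^sup>1)\<close> times the profile, which the drift \<open>c\<close> absorbs.
  Hence the level set lies behind \<open>c t + S\<close>.\<close>

section \<open>Parabolic comparison principle\<close>

definition has_parabolic_derivatives ::
    "(real \<Rightarrow> real \<Rightarrow> real) \<Rightarrow> real \<Rightarrow> real \<Rightarrow> real \<Rightarrow> real \<Rightarrow> bool" where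
  "has_parabolic_derivatives p t x pt pxx \<longleftrightarrow>
     ((\<lambda>s. p s x) has_real_derivative pt) (at_left t) \<and>
     (\<exists>px. (\<forall>\<^sub>F y in nhds x. ((\<lambda>y. p t y) has_real_derivative px y) (at y)) \<and>
           (px has_real_derivative pxx) (at x))"

lemma has_parabolic_derivativesI:
  assumes "((\<lambda>s. p s x) has_real_derivative pt) (at t)"
    and "\<forall>\<^sub>F y in nhds x. ((\<lambda>y. p t y) has_real_derivative px y) (at y)"
    and "(px has_real_derivative pxx) (at x)"
  shows "has_parabolic_derivatives p t x pt pxx"
  using assms has_field_derivative_at_within unfolding has_parabolic_derivatives_def by blast

lemma is_solution_parabolic_derivatives:
  assumes "is_solution f u0 u" "0 < t"
  obtains ut uxx where "has_parabolic_derivatives u t x ut uxx" "ut = uxx + f (u t x)"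
proof -
  from assms(1) obtain ut ux uxx where "\<forall>t>0. \<forall>x.
      ((\<lambda>s. u s x) has_real_derivative ut t x) (at t) \<and>
      ((\<lambda>y. u t y) has_real_derivative ux t x) (at x) \<and>
      ((\<lambda>y. ux t y) has_real_derivative uxx t x) (at x) \<and> ut t x = uxx t x + f (u t x)"
    unfolding is_solution_def by blast
  with \<open>0 < t\<close> have
      "((\<lambda>s. u s x) has_real_derivative ut t x) (at t)"
      "\<forall>y. ((\<lambda>y. u t y) has_real_derivative ux t y) (at y)"
      "(ux t has_real_derivative uxx t x) (at x)" "ut t x = uxx t x + f (u t x)"
    by blast+
  then show thesis
    by (intro that[of "ut t x" "uxx t x"] has_parabolic_derivativesI always_eventually)
qed

lemma has_real_derivative_at_left_max_nonneg:
  fixes h :: "real \<Rightarrow> real"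
  assumes "(h has_real_derivative D) (at_left t)"
    and "\<forall>\<^sub>F s in at_left t. h s \<le> h t"
  shows "0 \<le> D"
proof -
  have lim: "((\<lambda>s. (h s - h t) / (s - t)) \<longlongrightarrow> D) (at_left t)"
    using assms(1) by (simp add: has_field_derivative_iff)
  have "\<forall>\<^sub>F s in at_left t. s < t" by (simp add: eventually_at_filter)
  with assms(2) have "\<forall>\<^sub>F s in at_left t. 0 \<le> (h s - h t) / (s - t)"
    by eventually_elim (simp add: divide_nonpos_neg)
  with lim show ?thesis by (rule tendsto_lowerbound) simp
qed

lemma second_derivative_nonpos_at_max:
  fixes g g' :: "real \<Rightarrow> real"
  assumes max: "\<And>y. g y \<le> g x"
    and g': "\<forall>\<^sub>F y in nhds x. (g has_real_derivative g' y) (at y)"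
    and g'': "(g' has_real_derivative D) (at x)"
  shows "D \<le> 0"
proof (rule ccontr)
  assume "\<not> D \<le> 0"
  obtain e where e: "0 < e" "\<And>y. dist y x < e \<Longrightarrow> (g has_real_derivative g' y) (at y)"
    using g' unfolding eventually_nhds_metric by auto
  have "g' x = 0"
    using DERIV_local_max[of g "g' x" x e] e max by (auto simp: dist_real_def)
  moreover have "((\<lambda>y. (g' y - g' x) / (y - x)) \<longlongrightarrow> D) (at x)"
    using g'' by (simp add: has_field_derivative_iff)
  then have "\<forall>\<^sub>F y in at x. 0 < (g' y - g' x) / (y - x)"
    using \<open>\<not> D \<le> 0\<close> by (intro order_tendstoD(1)) auto
  then obtain d where d: "0 < d" "\<And>y. y \<noteq> x \<Longrightarrow> dist y x < d \<Longrightarrow> 0 < (g' y - g' x) / (y - x)"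
    unfolding eventually_at by auto
  define b where "b = x + min d e / 2"
  have "x < b" using d e by (simp add: b_def)
  moreover have "\<And>y. x \<le> y \<Longrightarrow> y \<le> b \<Longrightarrow> (g has_real_derivative g' y) (at y)"
    using e d by (auto simp: b_def dist_real_def)
  ultimately obtain z where z: "x < z" "z < b" "g b - g x = (b - x) * g' z"
    using MVT2 by blast
  with \<open>g' x = 0\<close> have "0 < g' z"
    using d(2)[of z] by (auto simp: b_def dist_real_def zero_less_divide_iff)
  with z \<open>x < b\<close> have "g x < g b" by (metis diff_gt_0_iff_gt mult_pos_pos)
  with max show False by (simp add: not_le[symmetric])
qed

lemma parabolic_derivatives_at_max:
  assumes W: "has_parabolic_derivatives W t x Wt Wxx" and "a < t"
    and max: "\<And>s y. a \<le> s \<Longrightarrow> s \<le> t \<Longrightarrow> W s y \<le> W t x"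
  shows "0 \<le> Wt" "Wxx \<le> 0"
proof -
  from W obtain Wx where
    Wt: "((\<lambda>s. W s x) has_real_derivative Wt) (at_left t)" and
    Wx: "\<forall>\<^sub>F y in nhds x. ((\<lambda>y. W t y) has_real_derivative Wx y) (at y)" and
    Wxx: "(Wx has_real_derivative Wxx) (at x)"
    unfolding has_parabolic_derivatives_def by blast
  have "\<forall>\<^sub>F s in at_left t. W s x \<le> W t x"
    using eventually_at_left_real[OF \<open>a < t\<close>] by eventually_elim (auto intro: max)
  with Wt show "0 \<le> Wt" by (rule has_real_derivative_at_left_max_nonneg)
  show "Wxx \<le> 0"
    using second_derivative_nonpos_at_max[OF _ Wx Wxx] max \<open>a < t\<close> by auto
qed

lemma has_parabolic_derivatives_penalised_difference:
  assumes p: "has_parabolic_derivatives p t x pt pxx"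
    and q: "has_parabolic_derivatives q t x qt qxx"
  shows "has_parabolic_derivatives (\<lambda>s y. exp (- M * s) * (p s y - q s y) - \<epsilon> * (y\<^sup>2 + 3 * s)) t x
      (exp (- M * t) * (pt - qt - M * (p t x - q t x)) - 3 * \<epsilon>)
      (exp (- M * t) * (pxx - qxx) - 2 * \<epsilon>)"
proof -
  from p obtain px where
    pt: "((\<lambda>s. p s x) has_real_derivative pt) (at_left t)" and
    px: "\<forall>\<^sub>F y in nhds x. ((\<lambda>y. p t y) has_real_derivative px y) (at y)" and
    pxx: "(px has_real_derivative pxx) (at x)"
    unfolding has_parabolic_derivatives_def by blast
  from q obtain qx where
    qt: "((\<lambda>s. q s x) has_real_derivative qt) (at_left t)" and
    qx: "\<forall>\<^sub>F y in nhds x. ((\<lambda>y. q t y) has_real_derivative qx y) (at y)" and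
    qxx: "(qx has_real_derivative qxx) (at x)"
    unfolding has_parabolic_derivatives_def by blast
  have "((\<lambda>s. exp (- M * s) * (p s x - q s x) - \<epsilon> * (x\<^sup>2 + 3 * s)) has_real_derivative
      exp (- M * t) * (pt - qt - M * (p t x - q t x)) - 3 * \<epsilon>) (at_left t)"
    by (auto intro!: derivative_eq_intros pt qt simp: algebra_simps)
  moreover have "\<forall>\<^sub>F y in nhds x.
      ((\<lambda>y. exp (- M * t) * (p t y - q t y) - \<epsilon> * (y\<^sup>2 + 3 * t)) has_real_derivative
       exp (- M * t) * (px y - qx y) - \<epsilon> * (2 * y)) (at y)"
    using px qx by eventually_elim (auto intro!: derivative_eq_intros)
  moreover have "((\<lambda>y. exp (- M * t) * (px y - qx y) - \<epsilon> * (2 * y)) has_real_derivative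
      exp (- M * t) * (pxx - qxx) - 2 * \<epsilon>) (at x)"
    by (auto intro!: derivative_eq_intros pxx qxx)
  ultimately show ?thesis unfolding has_parabolic_derivatives_def by (intro conjI exI) assumption+
qed

lemma penalised_difference_has_no_max:
  fixes p q :: "real \<Rightarrow> real \<Rightarrow> real"
  assumes lip: "\<And>a b. 0 \<le> b \<Longrightarrow> b \<le> a \<Longrightarrow> a \<le> 1 \<Longrightarrow> f a - f b \<le> M * (a - b)"
    and "0 < \<epsilon>" "0 < t" and range: "0 \<le> q t x" "q t x < p t x" "p t x \<le> 1"
    and p: "has_parabolic_derivatives p t x pt pxx" and q: "has_parabolic_derivatives q t x qt qxx"
    and pde: "pt - pxx - f (p t x) \<le> qt - qxx - f (q t x)"
    and max: "\<And>s y. 0 \<le> s \<Longrightarrow> s \<le> t \<Longrightarrow>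
      exp (- M * s) * (p s y - q s y) - \<epsilon> * (y\<^sup>2 + 3 * s) \<le> exp (- M * t) * (p t x - q t x) - \<epsilon> * (x\<^sup>2 + 3 * t)"
  shows False
proof -
  have "0 \<le> exp (- M * t) * (pt - qt - M * (p t x - q t x)) - 3 * \<epsilon>"
    "exp (- M * t) * (pxx - qxx) - 2 * \<epsilon> \<le> 0"
    using parabolic_derivatives_at_max[OF has_parabolic_derivatives_penalised_difference[OF p q] \<open>0 < t\<close>]
      max by auto
  moreover have "pt - qt - M * (p t x - q t x) \<le> pxx - qxx"
    using pde lip[of "q t x" "p t x"] range by force
  then have "exp (- M * t) * (pt - qt - M * (p t x - q t x)) \<le> exp (- M * t) * (pxx - qxx)"
    by simp
  ultimately show False using \<open>0 < \<epsilon>\<close> by linarith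
qed

lemma continuous_attains_sup_strip:
  fixes Z :: "real \<Rightarrow> real \<Rightarrow> real"
  assumes cont: "continuous_on ({a..b} \<times> UNIV) (\<lambda>(s, y). Z s y)" and "s0 \<in> {a..b}"
    and far: "\<And>s y. s \<in> {a..b} \<Longrightarrow> R < \<bar>y\<bar> \<Longrightarrow> Z s y \<le> Z s0 y0"
  obtains s1 y1 where "s1 \<in> {a..b}" "\<And>s y. s \<in> {a..b} \<Longrightarrow> Z s y \<le> Z s1 y1"
proof -
  define S :: "(real \<times> real) set" where "S = {a..b} \<times> cball 0 (max R \<bar>y0\<bar>)"
  have "(s0, y0) \<in> S" using \<open>s0 \<in> {a..b}\<close> by (simp add: S_def)
  moreover have "continuous_on S (\<lambda>(s, y). Z s y)"
    using cont by (rule continuous_on_subset) (auto simp: S_def)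
  moreover have "compact S" by (simp add: S_def compact_Times)
  ultimately obtain m where m: "m \<in> S" "\<And>z. z \<in> S \<Longrightarrow> (\<lambda>(s, y). Z s y) z \<le> (\<lambda>(s, y). Z s y) m"
    using continuous_attains_sup[of S "\<lambda>(s, y). Z s y"] by blast
  obtain s1 y1 where "m = (s1, y1)" by (cases m)
  have "Z s y \<le> Z s1 y1" if "s \<in> {a..b}" for s y
  proof (cases "(s, y) \<in> S")
    case True
    then show ?thesis using m(2)[of "(s, y)"] \<open>m = (s1, y1)\<close> by simp
  next
    case False
    then have "Z s y \<le> Z s0 y0" using that by (intro far) (auto simp: S_def)
    also have "Z s0 y0 \<le> Z s1 y1" using m(2)[OF \<open>(s0, y0) \<in> S\<close>] \<open>m = (s1, y1)\<close> by simp
    finally show ?thesis .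
  qed
  with m(1) \<open>m = (s1, y1)\<close> show thesis by (intro that) (auto simp: S_def)
qed

lemma parabolic_comparison:
  fixes p q :: "real \<Rightarrow> real \<Rightarrow> real"
  assumes lip: "\<And>a b. 0 \<le> b \<Longrightarrow> b \<le> a \<Longrightarrow> a \<le> 1 \<Longrightarrow> f a - f b \<le> M * (a - b)"
    and "0 \<le> M"
    and cont_p: "continuous_on ({0..} \<times> UNIV) (\<lambda>(t, x). p t x)"
    and cont_q: "continuous_on ({0..} \<times> UNIV) (\<lambda>(t, x). q t x)"
    and p_le_1: "\<And>t x. 0 \<le> t \<Longrightarrow> p t x \<le> 1"
    and q_nonneg: "\<And>t x. 0 \<le> t \<Longrightarrow> 0 \<le> q t x"
    and init: "\<And>x. p 0 x \<le> q 0 x"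
    and pde: "\<And>t x. 0 < t \<Longrightarrow> q t x < p t x \<Longrightarrow> \<exists>pt pxx qt qxx.
       has_parabolic_derivatives p t x pt pxx \<and> has_parabolic_derivatives q t x qt qxx \<and>
       pt - pxx - f (p t x) \<le> qt - qxx - f (q t x)"
    and "0 \<le> t"
  shows "p t x \<le> q t x"
proof (rule ccontr)
  assume "\<not> p t x \<le> q t x"
  define \<epsilon> where "\<epsilon> = exp (- M * t) * (p t x - q t x) / (2 * (x\<^sup>2 + 3 * t + 1))"
  \<comment> \<open>The penalty \<open>\<epsilon> (y\<^sup>2 + 3 s)\<close> forces a maximum of Z and makes its derivatives strict.\<close>
  define Z where "Z = (\<lambda>s y. exp (- M * s) * (p s y - q s y) - \<epsilon> * (y\<^sup>2 + 3 * s))"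
  have "0 \<le> x\<^sup>2 + 3 * t" using \<open>0 \<le> t\<close> by simp
  moreover have "0 < exp (- M * t) * (p t x - q t x)" using \<open>\<not> p t x \<le> q t x\<close> by simp
  ultimately have "0 < \<epsilon>" by (simp add: \<epsilon>_def)
  have "\<epsilon> * (x\<^sup>2 + 3 * t) < \<epsilon> * (2 * (x\<^sup>2 + 3 * t + 1))"
    using \<open>0 < \<epsilon>\<close> \<open>0 \<le> x\<^sup>2 + 3 * t\<close> by simp
  also have "\<dots> = exp (- M * t) * (p t x - q t x)"
    using \<open>0 \<le> x\<^sup>2 + 3 * t\<close> by (simp add: \<epsilon>_def)
  finally have Z_pos: "0 < Z t x" by (simp add: Z_def)
  have Z_far: "Z s y \<le> Z t x" if "s \<in> {0..t}" "max 1 (1 / \<epsilon>) < \<bar>y\<bar>" for s y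
  proof -
    have "exp (- M * s) * (p s y - q s y) \<le> exp (- M * s) * 1"
      using p_le_1[of s y] q_nonneg[of s y] that(1) by (intro mult_left_mono) auto
    also have "\<dots> \<le> 1" using \<open>0 \<le> M\<close> that(1) by simp
    finally have "exp (- M * s) * (p s y - q s y) \<le> 1" .
    moreover have "\<bar>y\<bar> * 1 \<le> \<bar>y\<bar> * \<bar>y\<bar>" using that(2) by (intro mult_left_mono) auto
    then have "1 / \<epsilon> < \<bar>y\<bar> * \<bar>y\<bar>" using that(2) by linarith
    then have "1 < \<epsilon> * y\<^sup>2" using \<open>0 < \<epsilon>\<close> by (simp add: field_simps power2_eq_square)
    moreover have "0 \<le> \<epsilon> * (3 * s)" using \<open>0 < \<epsilon>\<close> that(1) by simp
    ultimately show ?thesis using Z_pos by (simp add: Z_def algebra_simps)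
  qed
  have "continuous_on ({0..t} \<times> UNIV) (\<lambda>(s, y). Z s y)"
  proof -
    have "continuous_on ({0..t} \<times> UNIV) (\<lambda>(s, y). p s y)" "continuous_on ({0..t} \<times> UNIV) (\<lambda>(s, y). q s y)"
      by (auto intro: continuous_on_subset[OF cont_p] continuous_on_subset[OF cont_q])
    then show ?thesis unfolding Z_def case_prod_beta' by (intro continuous_intros)
  qed
  then obtain ts xs where ts: "ts \<in> {0..t}" and max: "\<And>s y. s \<in> {0..t} \<Longrightarrow> Z s y \<le> Z ts xs"
    using continuous_attains_sup_strip[of 0 t Z t "max 1 (1 / \<epsilon>)" x] Z_far \<open>0 \<le> t\<close> by auto
  have "0 < Z ts xs" using max[of t x] Z_pos \<open>0 \<le> t\<close> by simp
  moreover have "0 \<le> \<epsilon> * (xs\<^sup>2 + 3 * ts)" using \<open>0 < \<epsilon>\<close> ts by simp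
  ultimately have "0 < exp (- M * ts) * (p ts xs - q ts xs)" by (simp add: Z_def)
  then have "q ts xs < p ts xs" by (simp add: zero_less_mult_iff)
  moreover have "0 < ts" using ts init[of xs] \<open>q ts xs < p ts xs\<close> by (cases "ts = 0") auto
  ultimately obtain pt pxx qt qxx where derivs:
    "has_parabolic_derivatives p ts xs pt pxx" "has_parabolic_derivatives q ts xs qt qxx"
    "pt - pxx - f (p ts xs) \<le> qt - qxx - f (q ts xs)"
    using pde by blast
  have "0 \<le> q ts xs" "p ts xs \<le> 1" using q_nonneg p_le_1 ts by auto
  moreover have "Z s y \<le> Z ts xs" if "0 \<le> s" "s \<le> ts" for s y using max ts that by auto
  ultimately show False
    using penalised_difference_has_no_max[OF lip \<open>0 < \<epsilon>\<close> \<open>0 < ts\<close> _ \<open>q ts xs < p ts xs\<close> _ derivs]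
    unfolding Z_def by blast
qed

lemma subsolution_le_solution:
  assumes lip: "\<And>a b. 0 \<le> b \<Longrightarrow> b \<le> a \<Longrightarrow> a \<le> 1 \<Longrightarrow> f a - f b \<le> M * (a - b)"
    and "0 \<le> M" and sol: "is_solution f u0 u"
    and cont: "continuous_on ({0..} \<times> UNIV) (\<lambda>(t, x). w t x)"
    and le_1: "\<And>t x. 0 \<le> t \<Longrightarrow> w t x \<le> 1"
    and init: "\<And>x. w 0 x \<le> u0 x"
    and sub: "\<And>t x. 0 < t \<Longrightarrow> u t x < w t x \<Longrightarrow>
       \<exists>wt wxx. has_parabolic_derivatives w t x wt wxx \<and> wt - wxx \<le> f (w t x)"
    and "0 \<le> t"
  shows "w t x \<le> u t x"
proof (rule parabolic_comparison[OF lip \<open>0 \<le> M\<close> cont _ le_1 _ _ _ \<open>0 \<le> t\<close>])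
  fix t x :: real assume "0 < t" "u t x < w t x"
  with sub obtain wt wxx where "has_parabolic_derivatives w t x wt wxx" "wt - wxx \<le> f (w t x)"
    by blast
  moreover obtain ut uxx where "has_parabolic_derivatives u t x ut uxx" "ut = uxx + f (u t x)"
    using is_solution_parabolic_derivatives[OF sol \<open>0 < t\<close>] .
  ultimately show "\<exists>pt pxx qt qxx. has_parabolic_derivatives w t x pt pxx \<and>
      has_parabolic_derivatives u t x qt qxx \<and> pt - pxx - f (w t x) \<le> qt - qxx - f (u t x)"
    by force
qed (use sol init in \<open>auto simp: is_solution_def\<close>)

lemma supersolution_ge_solution:
  assumes lip: "\<And>a b. 0 \<le> b \<Longrightarrow> b \<le> a \<Longrightarrow> a \<le> 1 \<Longrightarrow> f a - f b \<le> M * (a - b)"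
    and "0 \<le> M" and sol: "is_solution f u0 u"
    and cont: "continuous_on ({0..} \<times> UNIV) (\<lambda>(t, x). v t x)"
    and nonneg: "\<And>t x. 0 \<le> t \<Longrightarrow> 0 \<le> v t x"
    and init: "\<And>x. u0 x \<le> v 0 x"
    and super: "\<And>t x. 0 < t \<Longrightarrow> v t x < u t x \<Longrightarrow>
       \<exists>vt vxx. has_parabolic_derivatives v t x vt vxx \<and> f (v t x) \<le> vt - vxx"
    and "0 \<le> t"
  shows "u t x \<le> v t x"
proof (rule parabolic_comparison[OF lip \<open>0 \<le> M\<close> _ cont _ nonneg _ _ \<open>0 \<le> t\<close>])
  fix t x :: real assume "0 < t" "v t x < u t x"
  with super obtain vt vxx where "has_parabolic_derivatives v t x vt vxx" "f (v t x) \<le> vt - vxx"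
    by blast
  moreover obtain ut uxx where "has_parabolic_derivatives u t x ut uxx" "ut = uxx + f (u t x)"
    using is_solution_parabolic_derivatives[OF sol \<open>0 < t\<close>] .
  ultimately show "\<exists>pt pxx qt qxx. has_parabolic_derivatives u t x pt pxx \<and>
      has_parabolic_derivatives v t x qt qxx \<and> pt - pxx - f (u t x) \<le> qt - qxx - f (v t x)"
    by force
qed (use sol init in \<open>auto simp: is_solution_def\<close>)

section \<open>A travelling-front subsolution\<close>

definition front_profile :: "real \<Rightarrow> real" where
  "front_profile z = z ^ 3 / (1 + z ^ 3)"

definition front_profile' :: "real \<Rightarrow> real" where
  "front_profile' z = 3 * z\<^sup>2 / (1 + z ^ 3)\<^sup>2"

definition front_profile'' :: "real \<Rightarrow> real" where
  "front_profile'' z = 6 * z * (1 - 2 * z ^ 3) / (1 + z ^ 3) ^ 3"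

lemma front_profile_has_derivative:
  assumes "0 \<le> z"
  shows "(front_profile has_real_derivative front_profile' z) (at z)"
proof -
  have "0 < 1 + z ^ 3" using assms by (simp add: add_pos_nonneg)
  then show ?thesis unfolding front_profile_def front_profile'_def
    by (auto intro!: derivative_eq_intros simp: divide_simps power2_eq_square power3_eq_cube)
      (simp add: algebra_simps)
qed

lemma front_profile'_has_derivative:
  assumes "0 \<le> z"
  shows "(front_profile' has_real_derivative front_profile'' z) (at z)"
proof -
  have "0 < 1 + z ^ 3" using assms by (simp add: add_pos_nonneg)
  then show ?thesis unfolding front_profile'_def front_profile''_def
    by (auto intro!: derivative_eq_intros simp: divide_simps) algebra
qed

lemma front_profile_bounds:
  assumes "0 \<le> z"
  shows "0 \<le> front_profile z" "front_profile z \<le> 1"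
    and "0 \<le> front_profile' z" "front_profile' z \<le> 3"
    and "\<bar>front_profile'' z\<bar> \<le> 12"
proof -
  have z3: "0 \<le> z ^ 3" using assms by simp
  then have D: "1 \<le> 1 + z ^ 3" by simp
  have "\<And>w::real. 0 \<le> w \<Longrightarrow> 0 \<le> w / (1 + w) \<and> w / (1 + w) \<le> 1" by simp
  from this[OF z3] show "0 \<le> front_profile z" "front_profile z \<le> 1"
    by (simp_all add: front_profile_def)
  show "0 \<le> front_profile' z" by (simp add: front_profile'_def)
  have "z \<le> 1 + z ^ 3 \<and> z\<^sup>2 \<le> 1 + z ^ 3"
  proof (cases "z \<le> 1")
    case True
    then have "z\<^sup>2 \<le> 1" using assms by (simp add: power_le_one)
    with True z3 show ?thesis by linarith
  next
    case False
    then have "z * 1 \<le> z * z" "z * z * 1 \<le> z * z * z" using assms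
      by (intro mult_left_mono; simp)+
    then show ?thesis by (simp add: power2_eq_square power3_eq_cube)
  qed
  then have "z \<le> 1 + z ^ 3" "z\<^sup>2 \<le> 1 + z ^ 3" by simp_all
  moreover have "1 + z ^ 3 \<le> (1 + z ^ 3)\<^sup>2" "(1 + z ^ 3)\<^sup>2 \<le> (1 + z ^ 3) ^ 3"
    using D by (simp_all add: power2_eq_square power3_eq_cube)
  ultimately show "front_profile' z \<le> 3" using D
    by (simp add: front_profile'_def divide_le_eq)
  have "\<bar>6 * z * (1 - 2 * z ^ 3)\<bar> \<le> 6 * z * (2 * (1 + z ^ 3))"
    using assms z3 by (simp add: abs_mult abs_le_iff mult_left_mono)
  also have "\<dots> = z * (12 * (1 + z ^ 3))" by simp
  also have "\<dots> \<le> (1 + z ^ 3) * (12 * (1 + z ^ 3))"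
    using \<open>z \<le> 1 + z ^ 3\<close> D by (intro mult_right_mono) auto
  also have "\<dots> = 12 * (1 + z ^ 3)\<^sup>2" by (simp add: power2_eq_square)
  also have "\<dots> \<le> 12 * (1 + z ^ 3) ^ 3" using \<open>(1 + z ^ 3)\<^sup>2 \<le> (1 + z ^ 3) ^ 3\<close>
    by simp
  finally have "\<bar>6 * z * (1 - 2 * z ^ 3)\<bar> \<le> 12 * (1 + z ^ 3) ^ 3" .
  moreover have P: "0 < (1 + z ^ 3) ^ 3" using D by (intro zero_less_power) linarith
  ultimately show "\<bar>front_profile'' z\<bar> \<le> 12"
    unfolding front_profile''_def abs_divide abs_of_pos[OF P] pos_divide_le_eq[OF P] by blast
qed

lemma front_profile_near_zero:
  assumes "0 \<le> z" "z \<le> 1/2"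
  shows "front_profile z \<le> z / 4" "front_profile' z \<le> 3 * z / 2" "3 * z \<le> front_profile'' z"
proof -
  have z2: "z\<^sup>2 \<le> z / 2" using mult_left_mono[OF assms(2) assms(1)] by (simp add: power2_eq_square)
  have z3: "z ^ 3 \<le> z / 4" "0 \<le> z ^ 3" using mult_mono[OF assms(2) z2] assms
    by (simp_all add: power2_eq_square power3_eq_cube)
  have "z ^ 3 * 1 \<le> z ^ 3 * (1 + z ^ 3)" using z3(2) by (intro mult_left_mono) auto
  then have "front_profile z \<le> z ^ 3"
    using z3(2) by (simp add: front_profile_def pos_divide_le_eq add_pos_nonneg)
  with z3 show "front_profile z \<le> z / 4" by linarith
  have "1 \<le> (1 + z ^ 3)\<^sup>2" using z3(2) by (simp add: one_le_power)
  then have "front_profile' z \<le> 3 * z\<^sup>2 / 1"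
    unfolding front_profile'_def by (intro divide_left_mono) auto
  with z2 show "front_profile' z \<le> 3 * z / 2" by linarith
  have "(1 + z ^ 3) ^ 3 \<le> (9 / 8) ^ 3" using z3 assms by (intro power_mono) auto
  then have "3 * z * (1 + z ^ 3) ^ 3 \<le> 3 * z * (9 / 8) ^ 3"
    by (rule mult_left_mono) (use assms in simp)
  also have "\<dots> \<le> 6 * z * (3 / 4)" using assms by (simp add: power3_eq_cube)
  also have "\<dots> \<le> 6 * z * (1 - 2 * z ^ 3)" using z3 assms by (intro mult_left_mono) auto
  finally show "3 * z \<le> front_profile'' z"
    using z3(2) by (simp add: front_profile''_def le_divide_eq add_pos_nonneg)
qed

lemma front_profile_ge_one_ninth:
  assumes "1/2 \<le> z"
  shows "1/9 \<le> front_profile z"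
proof -
  have "(1/2) ^ 3 \<le> z ^ 3" using assms by (intro power_mono) auto
  then have "1/8 \<le> z ^ 3" by (simp add: power_divide)
  then show ?thesis by (simp add: front_profile_def le_divide_eq)
qed

lemma front_profile_exceeds:
  assumes "0 \<le> q" "q < 1"
  obtains z where "0 < z" "q \<le> front_profile z"
proof
  define z where "z = q / (1 - q) + 1"
  have "0 \<le> q / (1 - q)" using assms by simp
  then show "0 < z" by (simp add: z_def)
  have "1 \<le> z" using assms by (simp add: z_def)
  then have "z \<le> z ^ 3" using mult_mono[OF \<open>1 \<le> z\<close> \<open>1 \<le> z\<close>]
    by (simp add: power3_eq_cube mult_le_cancel_left1)
  then have "q / (1 - q) \<le> z ^ 3" by (simp add: z_def)
  then have "q \<le> z ^ 3 * (1 - q)" using assms by (simp add: pos_divide_le_eq)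
  then show "q \<le> front_profile z"
    using \<open>1 \<le> z\<close> by (simp add: front_profile_def le_divide_eq algebra_simps add_pos_nonneg)
qed

lemma front_subsolution_ineq:
  assumes "0 < z" and a: "a0 \<le> a" "a \<le> \<theta>" "\<theta> < 1" "0 < a0" and da: "0 \<le> da" "da \<le> \<kappa>"
    and "1 \<le> L" "0 < \<Gamma>" and \<kappa>: "\<kappa> \<le> a0 / L\<^sup>2" "\<kappa> \<le> m / 3"
    and \<Gamma>: "\<Gamma> \<le> a0 / L" "3 * \<Gamma> / L \<le> m / 3" and L: "12 / L\<^sup>2 \<le> m / 3"
    and f_nonneg: "\<And>s. 0 \<le> s \<Longrightarrow> s \<le> 1 \<Longrightarrow> 0 \<le> f s"
    and f_ge_m: "\<And>s. a0 / 9 \<le> s \<Longrightarrow> s \<le> \<theta> \<Longrightarrow> m \<le> f s"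
  shows "da * front_profile z + a * \<Gamma> * front_profile' z / L - a * front_profile'' z / L\<^sup>2
    \<le> f (a * front_profile z)"
proof -
  note H = front_profile_bounds[OF less_imp_le[OF \<open>0 < z\<close>]]
  have "0 < L" using \<open>1 \<le> L\<close> by simp
  have "0 \<le> a * front_profile z" "a * front_profile z \<le> a"
    using a H by (auto simp: mult_left_le)
  show ?thesis
  proof (cases "z \<le> 1/2")
    \<comment> \<open>Near the leading edge diffusion dominates, since \<open>front_profile'' z \<ge> 3 z\<close>.\<close>
    case True
    note H0 = front_profile_near_zero[OF less_imp_le[OF \<open>0 < z\<close>] True]
    have "da * front_profile z \<le> a0 / L\<^sup>2 * (z / 4)"
      using da \<kappa> H H0 by (intro mult_mono) auto
    moreover have "a * \<Gamma> * front_profile' z \<le> 1 * (a0 / L) * (3 * z / 2)"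
      using a \<Gamma> H H0 \<open>0 < \<Gamma>\<close> by (intro mult_mono) auto
    then have "a * \<Gamma> * front_profile' z / L \<le> a0 / L * (3 * z / 2) / L"
      by (intro divide_right_mono) (use \<open>0 < L\<close> in auto)
    moreover have "a0 * (3 * z) \<le> a * front_profile'' z"
      using a H0 \<open>0 < z\<close> by (intro mult_mono) auto
    then have "a0 * (3 * z) / L\<^sup>2 \<le> a * front_profile'' z / L\<^sup>2"
      by (simp add: divide_right_mono)
    moreover have "a0 / L\<^sup>2 * (z / 4) + a0 / L * (3 * z / 2) / L - a0 * (3 * z) / L\<^sup>2
        = - 5 / 4 * (a0 * z / L\<^sup>2)"
      by (simp add: field_simps power2_eq_square)
    moreover have "0 \<le> a0 * z / L\<^sup>2" using a \<open>0 < z\<close> by simp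
    moreover have "0 \<le> f (a * front_profile z)"
      using \<open>0 \<le> a * front_profile z\<close> \<open>a * front_profile z \<le> a\<close> a
      by (intro f_nonneg) linarith+
    ultimately show ?thesis by linarith
  next
    \<comment> \<open>Behind it the amplitude lies in the range where \<open>f \<ge> m\<close>.\<close>
    case False
    have "da * front_profile z \<le> \<kappa> * 1" using da H by (intro mult_mono) auto
    moreover have "a * \<Gamma> * front_profile' z \<le> 1 * \<Gamma> * 3"
      using a H \<open>0 < \<Gamma>\<close> by (intro mult_mono) auto
    then have "a * \<Gamma> * front_profile' z / L \<le> 3 * \<Gamma> / L"
      by (intro divide_right_mono) (use \<open>0 < L\<close> in auto)
    moreover have "- (a * front_profile'' z / L\<^sup>2) \<le> 12 / L\<^sup>2"
    proof -
      have "- (a * front_profile'' z) \<le> a * \<bar>front_profile'' z\<bar>"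
        using mult_left_mono[of "- front_profile'' z" "\<bar>front_profile'' z\<bar>" a] a by simp
      also have "\<dots> \<le> 1 * 12" using a H(5) by (intro mult_mono) auto
      finally show ?thesis by (auto dest: divide_right_mono[of _ _ "L\<^sup>2"])
    qed
    moreover have "a0 * (1/9) \<le> a * front_profile z"
      using a front_profile_ge_one_ninth[of z] False by (intro mult_mono) auto
    then have "m \<le> f (a * front_profile z)"
      using \<open>a * front_profile z \<le> a\<close> a by (intro f_ge_m) linarith+
    ultimately show ?thesis using \<kappa> \<Gamma> L by linarith
  qed
qed

lemma continuous_on_front_profile_max: "continuous_on UNIV (\<lambda>v. front_profile (max 0 v))"
proof -
  have "1 + (max 0 v) ^ 3 \<noteq> 0" for v :: real
  proof -
    have "0 \<le> (max 0 v) ^ 3" by simp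
    then show ?thesis by linarith
  qed
  then show ?thesis unfolding front_profile_def by (intro continuous_intros) auto
qed

lemma front_parabolic_derivatives:
  fixes a :: "real \<Rightarrow> real"
  assumes a': "(a has_real_derivative a') (at t)" and "0 < L" and "x < l + \<Gamma> * t"
  defines "z \<equiv> (l + \<Gamma> * t - x) / L"
  shows "has_parabolic_derivatives (\<lambda>s y. a s * front_profile (max 0 ((l + \<Gamma> * s - y) / L))) t x
    (a' * front_profile z + a t * \<Gamma> * front_profile' z / L) (a t * front_profile'' z / L\<^sup>2)"
proof (rule has_parabolic_derivativesI)
  have w: "max 0 ((l + \<Gamma> * s - y) / L) = (l + \<Gamma> * s - y) / L" if "y < l + \<Gamma> * s" for s y
    using that \<open>0 < L\<close> by simp
  have "0 < z" using assms by (simp add: z_def)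
  have "((\<lambda>s. (l + \<Gamma> * s - x) / L) has_real_derivative \<Gamma> / L) (at t)"
    using \<open>0 < L\<close> by (auto intro!: derivative_eq_intros)
  from DERIV_chain2[OF front_profile_has_derivative this] \<open>0 < z\<close>
  have "((\<lambda>s. front_profile ((l + \<Gamma> * s - x) / L)) has_real_derivative front_profile' z * (\<Gamma> / L)) (at t)"
    by (simp add: z_def)
  from DERIV_mult[OF a' this]
  have "((\<lambda>s. a s * front_profile ((l + \<Gamma> * s - x) / L)) has_real_derivative
      a' * front_profile z + a t * \<Gamma> * front_profile' z / L) (at t)"
    by (simp add: z_def algebra_simps)
  moreover have "open {s. x < l + \<Gamma> * s}" by (intro open_Collect_less continuous_intros)
  ultimately show "((\<lambda>s. a s * front_profile (max 0 ((l + \<Gamma> * s - x) / L))) has_real_derivative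
      a' * front_profile z + a t * \<Gamma> * front_profile' z / L) (at t)"
    using \<open>x < l + \<Gamma> * t\<close> by (elim has_field_derivative_transform_within_open) (auto simp: w)
  define px where "px = (\<lambda>y. - a t * front_profile' ((l + \<Gamma> * t - y) / L) / L)"
  have "((\<lambda>y. a t * front_profile (max 0 ((l + \<Gamma> * t - y) / L))) has_real_derivative px y) (at y)"
    if "y < l + \<Gamma> * t" for y
  proof -
    have "((\<lambda>y. (l + \<Gamma> * t - y) / L) has_real_derivative - 1 / L) (at y)"
      using \<open>0 < L\<close> by (auto intro!: derivative_eq_intros)
    from DERIV_chain2[OF front_profile_has_derivative this] that \<open>0 < L\<close>
    have "((\<lambda>y. a t * front_profile ((l + \<Gamma> * t - y) / L)) has_real_derivative px y) (at y)"
      unfolding px_def by (auto intro!: derivative_eq_intros)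
    then show ?thesis
      using that
      by (elim has_field_derivative_transform_within_open[where S = "{..< l + \<Gamma> * t}"]) (auto simp: w)
  qed
  moreover have "\<forall>\<^sub>F y in nhds x. y < l + \<Gamma> * t"
    using \<open>x < l + \<Gamma> * t\<close> by (intro eventually_nhds_in_open[of "{..< l + \<Gamma> * t}", simplified]) auto
  ultimately show "\<forall>\<^sub>F y in nhds x.
      ((\<lambda>y. a t * front_profile (max 0 ((l + \<Gamma> * t - y) / L))) has_real_derivative px y) (at y)"
    by (auto elim: eventually_mono)
  have "((\<lambda>y. (l + \<Gamma> * t - y) / L) has_real_derivative - 1 / L) (at x)"
    using \<open>0 < L\<close> by (auto intro!: derivative_eq_intros)
  from DERIV_chain2[OF front_profile'_has_derivative this] \<open>0 < z\<close>
  show "(px has_real_derivative a t * front_profile'' z / L\<^sup>2) (at x)"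
    unfolding px_def by (auto intro!: derivative_eq_intros simp: z_def power2_eq_square)
qed

definition front_amplitude :: "real \<Rightarrow> real \<Rightarrow> real \<Rightarrow> real \<Rightarrow> real" where
  "front_amplitude \<theta> a0 \<kappa> t = \<theta> - (\<theta> - a0) * exp (- \<kappa> * t)"

lemma front_amplitude_has_derivative:
  "(front_amplitude \<theta> a0 \<kappa> has_real_derivative (\<theta> - a0) * \<kappa> * exp (- \<kappa> * t)) (at t)"
  unfolding front_amplitude_def by (auto intro!: derivative_eq_intros)

lemma front_amplitude_bounds:
  assumes "0 < a0" "a0 < \<theta>" "\<theta> < 1" "0 < \<kappa>" "0 \<le> t"
  shows "a0 \<le> front_amplitude \<theta> a0 \<kappa> t" "front_amplitude \<theta> a0 \<kappa> t \<le> \<theta>"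
    and "0 \<le> (\<theta> - a0) * \<kappa> * exp (- \<kappa> * t)" "(\<theta> - a0) * \<kappa> * exp (- \<kappa> * t) \<le> \<kappa>"
proof -
  have e: "exp (- \<kappa> * t) \<le> 1" using assms by simp
  then have "(\<theta> - a0) * exp (- \<kappa> * t) \<le> \<theta> - a0" using assms by (intro mult_left_le) auto
  then show "a0 \<le> front_amplitude \<theta> a0 \<kappa> t" unfolding front_amplitude_def by linarith
  have "0 \<le> (\<theta> - a0) * exp (- \<kappa> * t)" using assms by simp
  then show "front_amplitude \<theta> a0 \<kappa> t \<le> \<theta>" unfolding front_amplitude_def by linarith
  show "0 \<le> (\<theta> - a0) * \<kappa> * exp (- \<kappa> * t)" using assms by simp
  have "(\<theta> - a0) * \<kappa> * exp (- \<kappa> * t) \<le> 1 * \<kappa> * 1"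
    using assms e by (intro mult_mono) auto
  then show "(\<theta> - a0) * \<kappa> * exp (- \<kappa> * t) \<le> \<kappa>" by simp
qed

lemma front_amplitude_tendsto: "0 < \<kappa> \<Longrightarrow> (front_amplitude \<theta> a0 \<kappa> \<longlongrightarrow> \<theta>) at_top"
  unfolding front_amplitude_def by real_asymp

lemma front_subsolution:
  assumes f_nonneg: "\<And>s. 0 \<le> s \<Longrightarrow> s \<le> 1 \<Longrightarrow> 0 \<le> f s"
    and f_ge_m: "\<And>s. a0 / 9 \<le> s \<Longrightarrow> s \<le> \<theta> \<Longrightarrow> m \<le> f s"
    and a0: "0 < a0" "a0 < \<theta>" "\<theta> < 1" and "0 < \<kappa>" "1 \<le> L" "0 < \<Gamma>"
    and \<kappa>: "\<kappa> \<le> a0 / L\<^sup>2" "\<kappa> \<le> m / 3"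
    and \<Gamma>: "\<Gamma> \<le> a0 / L" "3 * \<Gamma> / L \<le> m / 3" and L: "12 / L\<^sup>2 \<le> m / 3"
    and "0 < t" "x < l + \<Gamma> * t"
  shows "\<exists>wt wxx.
    has_parabolic_derivatives (\<lambda>t x. front_amplitude \<theta> a0 \<kappa> t * front_profile (max 0 ((l + \<Gamma> * t - x) / L)))
      t x wt wxx \<and>
    wt - wxx \<le> f (front_amplitude \<theta> a0 \<kappa> t * front_profile (max 0 ((l + \<Gamma> * t - x) / L)))"
proof -
  define w where "w = (\<lambda>t x. front_amplitude \<theta> a0 \<kappa> t * front_profile (max 0 ((l + \<Gamma> * t - x) / L)))"
  define a where "a = front_amplitude \<theta> a0 \<kappa>"
  define a' where "a' = (\<theta> - a0) * \<kappa> * exp (- \<kappa> * t)"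
  define z where "z = (l + \<Gamma> * t - x) / L"
  have "0 < L" using \<open>1 \<le> L\<close> by simp
  then have "0 < z" using \<open>x < l + \<Gamma> * t\<close> by (simp add: z_def)
  then have "w t x = a t * front_profile z" by (simp add: w_def a_def z_def)
  moreover have "a' * front_profile z + a t * \<Gamma> * front_profile' z / L - a t * front_profile'' z / L\<^sup>2
      \<le> f (a t * front_profile z)"
    using front_amplitude_bounds[OF a0 \<open>0 < \<kappa>\<close>, of t] \<open>0 < t\<close> \<open>0 < z\<close> unfolding a_def a'_def
    by (intro front_subsolution_ineq[OF _ _ _ a0(3,1) _ _ \<open>1 \<le> L\<close> \<open>0 < \<Gamma>\<close> \<kappa> \<Gamma> L f_nonneg f_ge_m]) auto
  moreover have "has_parabolic_derivatives w t x
      (a' * front_profile z + a t * \<Gamma> * front_profile' z / L) (a t * front_profile'' z / L\<^sup>2)"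
    unfolding w_def z_def a_def a'_def
    by (rule front_parabolic_derivatives[OF front_amplitude_has_derivative \<open>0 < L\<close> \<open>x < l + \<Gamma> * t\<close>])
  ultimately show ?thesis unfolding w_def by force
qed

lemma front_le_solution:
  assumes lip: "\<And>a b. 0 \<le> b \<Longrightarrow> b \<le> a \<Longrightarrow> a \<le> 1 \<Longrightarrow> f a - f b \<le> M * (a - b)"
    and "0 \<le> M" and sol: "is_solution f u0 u"
    and f_nonneg: "\<And>s. 0 \<le> s \<Longrightarrow> s \<le> 1 \<Longrightarrow> 0 \<le> f s"
    and f_ge_m: "\<And>s. a0 / 9 \<le> s \<Longrightarrow> s \<le> \<theta> \<Longrightarrow> m \<le> f s"
    and left: "\<And>x. x \<le> l \<Longrightarrow> a0 \<le> u0 x"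
    and a0: "0 < a0" "a0 < \<theta>" "\<theta> < 1" and "0 < \<kappa>" "1 \<le> L" "0 < \<Gamma>"
    and \<kappa>: "\<kappa> \<le> a0 / L\<^sup>2" "\<kappa> \<le> m / 3"
    and \<Gamma>: "\<Gamma> \<le> a0 / L" "3 * \<Gamma> / L \<le> m / 3" and L: "12 / L\<^sup>2 \<le> m / 3"
    and "0 \<le> t"
  shows "front_amplitude \<theta> a0 \<kappa> t * front_profile (max 0 ((l + \<Gamma> * t - x) / L)) \<le> u t x"
proof -
  have "0 < L" using \<open>1 \<le> L\<close> by simp
  have u_nonneg: "0 \<le> u t x" if "0 \<le> t" for t x
    using sol that by (simp add: is_solution_def)
  define w where "w = (\<lambda>t x. front_amplitude \<theta> a0 \<kappa> t * front_profile (max 0 ((l + \<Gamma> * t - x) / L)))"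
  have w_zero: "w t x = 0" if "l + \<Gamma> * t \<le> x" for t x
    using that \<open>0 < L\<close> by (simp add: w_def front_profile_def divide_le_0_iff)
  have "w t x \<le> u t x"
  proof (rule subsolution_le_solution[OF lip \<open>0 \<le> M\<close> sol _ _ _ _ \<open>0 \<le> t\<close>])
    show "continuous_on ({0..} \<times> UNIV) (\<lambda>(t, x). w t x)"
      unfolding w_def front_amplitude_def case_prod_beta' using \<open>0 < L\<close>
      by (intro continuous_intros continuous_on_compose2[OF continuous_on_front_profile_max]) auto
    show "w t x \<le> 1" if "0 \<le> t" for t x
      using front_amplitude_bounds[OF a0 \<open>0 < \<kappa>\<close> that] a0
        front_profile_bounds[of "max 0 ((l + \<Gamma> * t - x) / L)"]
      unfolding w_def by (intro mult_le_one) auto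
    show "w 0 x \<le> u0 x" for x
    proof (cases "x \<le> l")
      case True
      have "w 0 x \<le> a0 * 1"
        using a0 front_profile_bounds[of "max 0 ((l - x) / L)"] by (simp add: w_def front_amplitude_def)
      then show ?thesis using left[OF True] by simp
    next
      case False
      then show ?thesis using w_zero[of 0 x] u_nonneg[of 0 x] sol by (simp add: is_solution_def)
    qed
    show "\<exists>wt wxx. has_parabolic_derivatives w t x wt wxx \<and> wt - wxx \<le> f (w t x)"
      if "0 < t" "u t x < w t x" for t x
    proof -
      have "x < l + \<Gamma> * t"
        using that w_zero[of t x] u_nonneg[of t x] by (cases "x < l + \<Gamma> * t") auto
      from front_subsolution[OF f_nonneg f_ge_m a0 \<open>0 < \<kappa>\<close> \<open>1 \<le> L\<close> \<open>0 < \<Gamma>\<close> \<kappa> \<Gamma> L \<open>0 < t\<close> this]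
      show ?thesis unfolding w_def .
    qed
  qed
  then show ?thesis by (simp add: w_def)
qed

lemma continuous_on_Icc_pos_bounded_below:
  fixes f :: "real \<Rightarrow> real"
  assumes "continuous_on {a..b} f" and "\<And>s. s \<in> {a..b} \<Longrightarrow> 0 < f s"
  obtains m where "0 < m" "\<And>s. s \<in> {a..b} \<Longrightarrow> m \<le> f s"
proof (cases "a \<le> b")
  case True
  then obtain s where "s \<in> {a..b}" "\<And>y. y \<in> {a..b} \<Longrightarrow> f s \<le> f y"
    using continuous_attains_inf[OF compact_Icc _ assms(1)] by auto
  with assms(2) show thesis by (intro that[of "f s"]) auto
qed (auto intro: that[of 1])

lemma front_parameters_exist:
  fixes a0 m :: real
  assumes "0 < a0" "0 < m"
  obtains L \<kappa> \<Gamma> where "0 < \<kappa>" "1 \<le> L" "0 < \<Gamma>" "\<kappa> \<le> a0 / L\<^sup>2" "\<kappa> \<le> m / 3"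
    "\<Gamma> \<le> a0 / L" "3 * \<Gamma> / L \<le> m / 3" "12 / L\<^sup>2 \<le> m / 3"
proof -
  define L where "L = 1 + 36 / m"
  have "1 \<le> L" using \<open>0 < m\<close> by (simp add: L_def)
  then have "L * 1 \<le> L * L" by (intro mult_left_mono) auto
  then have "36 / m \<le> L * L" by (simp add: L_def)
  then have "12 / L\<^sup>2 \<le> m / 3" using \<open>0 < m\<close> \<open>1 \<le> L\<close> by (simp add: field_simps power2_eq_square)
  moreover have "3 * min (a0 / L) (m * L / 9) / L \<le> m / 3"
    using \<open>1 \<le> L\<close> by (simp add: min_le_iff_disj field_simps)
  ultimately show thesis
    using assms \<open>1 \<le> L\<close> min.cobounded2[of "a0 / L\<^sup>2" "m / 3"]
    by (intro that[of "min (a0 / L\<^sup>2) (m / 3)" L "min (a0 / L) (m * L / 9)"]) auto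
qed

lemma spreading_lower_bound:
  assumes lip: "\<And>a b. 0 \<le> b \<Longrightarrow> b \<le> a \<Longrightarrow> a \<le> 1 \<Longrightarrow> f a - f b \<le> M * (a - b)"
    and "0 \<le> M" and sol: "is_solution f u0 u" and f_cont: "continuous_on {0..1} f"
    and f_nonneg: "\<And>s. 0 \<le> s \<Longrightarrow> s \<le> 1 \<Longrightarrow> 0 \<le> f s"
    and f_pos: "\<And>s. 0 < s \<Longrightarrow> s < 1 \<Longrightarrow> 0 < f s"
    and left: "\<And>x. x \<le> l \<Longrightarrow> \<delta> \<le> u0 x" and "0 < \<delta>"
    and lv: "0 < lv" "lv < 1"
  obtains \<Gamma> T where "0 < \<Gamma>" "\<And>t. T < t \<Longrightarrow> \<exists>x. lv \<le> u t x \<and> \<Gamma> * t < x"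
proof -
  define \<theta> where "\<theta> = (1 + lv) / 2"
  define \<theta>' where "\<theta>' = (lv + \<theta>) / 2"
  define a0 where "a0 = min \<delta> (\<theta> / 2)"
  have \<theta>: "lv < \<theta>'" "\<theta>' < \<theta>" "\<theta> < 1" using lv by (auto simp: \<theta>_def \<theta>'_def)
  have a0: "0 < a0" "a0 < \<theta>" "a0 \<le> \<delta>" using \<open>0 < \<delta>\<close> lv by (auto simp: a0_def \<theta>_def min_def)
  have "continuous_on {a0/9..\<theta>} f" using f_cont by (rule continuous_on_subset) (use a0 \<theta> in auto)
  moreover have "0 < f s" if "s \<in> {a0/9..\<theta>}" for s using that f_pos a0 \<theta> by auto
  ultimately obtain m where "0 < m" and "\<And>s. s \<in> {a0/9..\<theta>} \<Longrightarrow> m \<le> f s"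
    using continuous_on_Icc_pos_bounded_below by blast
  then have f_ge_m: "\<And>s. a0 / 9 \<le> s \<Longrightarrow> s \<le> \<theta> \<Longrightarrow> m \<le> f s" by simp
  obtain L \<kappa> \<Gamma> where "0 < \<kappa>" "1 \<le> L" "0 < \<Gamma>" and params: "\<kappa> \<le> a0 / L\<^sup>2" "\<kappa> \<le> m / 3"
    "\<Gamma> \<le> a0 / L" "3 * \<Gamma> / L \<le> m / 3" "12 / L\<^sup>2 \<le> m / 3"
    using front_parameters_exist[OF \<open>0 < a0\<close> \<open>0 < m\<close>] by blast
  obtain Z where "0 < Z" and Z: "lv / \<theta>' \<le> front_profile Z"
    using front_profile_exceeds[of "lv / \<theta>'"] lv \<theta> by auto
  define a where "a = front_amplitude \<theta> a0 \<kappa>"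
  have below: "a t * front_profile (max 0 ((l + \<Gamma> * t - x) / L)) \<le> u t x" if "0 \<le> t" for t x
    unfolding a_def using left a0
    by (intro front_le_solution[OF lip \<open>0 \<le> M\<close> sol f_nonneg f_ge_m _ _ _ _ \<open>0 < \<kappa>\<close> \<open>1 \<le> L\<close>
          \<open>0 < \<Gamma>\<close> params that]) (auto intro: order_trans \<theta>)
  have "\<forall>\<^sub>F t in at_top. \<theta>' < a t"
    unfolding a_def using front_amplitude_tendsto[OF \<open>0 < \<kappa>\<close>] \<open>\<theta>' < \<theta>\<close> by (rule order_tendstoD)
  moreover have "\<forall>\<^sub>F t in at_top. \<Gamma> / 2 * t < l + \<Gamma> * t - L * Z" using \<open>0 < \<Gamma>\<close> by real_asymp
  moreover have "\<forall>\<^sub>F t in at_top. 0 \<le> (t::real)" by (rule eventually_ge_at_top)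
  ultimately have "\<forall>\<^sub>F t in at_top. \<theta>' < a t \<and> \<Gamma> / 2 * t < l + \<Gamma> * t - L * Z \<and> 0 \<le> t"
    by (intro eventually_conj)
  then obtain T where T: "\<And>t. T \<le> t \<Longrightarrow> \<theta>' < a t \<and> \<Gamma> / 2 * t < l + \<Gamma> * t - L * Z \<and> 0 \<le> t"
    unfolding eventually_at_top_linorder by blast
  show thesis
  proof (rule that[of "\<Gamma> / 2" T])
    show "0 < \<Gamma> / 2" using \<open>0 < \<Gamma>\<close> by simp
    fix t assume "T < t"
    define x where "x = l + \<Gamma> * t - L * Z"
    have "(l + \<Gamma> * t - x) / L = Z" using \<open>1 \<le> L\<close> by (simp add: x_def)
    then have "a t * front_profile Z \<le> u t x" using below[of t x] T[of t] \<open>T < t\<close> \<open>0 < Z\<close> by simp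
    moreover have "lv = \<theta>' * (lv / \<theta>')" using \<theta> lv by simp
    then have "lv \<le> a t * front_profile Z"
      using T[of t] \<open>T < t\<close> Z \<theta> lv mult_mono[of \<theta>' "a t" "lv / \<theta>'" "front_profile Z"] by simp
    moreover have "\<Gamma> / 2 * t < x" using T[of t] \<open>T < t\<close> by (simp add: x_def)
    ultimately show "\<exists>x. lv \<le> u t x \<and> \<Gamma> / 2 * t < x" by (blast intro: order_trans)
  qed
qed

section \<open>A stretched-exponential supersolution\<close>

lemma log_weight_le_stretched_exp:
  fixes \<sigma> :: real
  assumes "1 \<le> \<sigma>" "0 < b" "b \<le> 1" "0 < \<mu>" "1 \<le> A" "A * exp (- \<mu> * \<sigma> powr b) < 1"
    and "1 \<le> b * (1 + \<alpha>)" "0 < \<alpha>" "0 < r"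
    and c: "r * (2 / \<mu>) powr \<alpha> \<le> c" "r * (max ((2 * ln A / \<mu>) powr (1 / b)) 1) powr (1 - b) \<le> c"
  shows "r / (1 + \<bar>ln (A * exp (- \<mu> * \<sigma> powr b))\<bar>) powr \<alpha> \<le> c * \<sigma> powr (b - 1)"
proof -
  define D where "D = (1 + \<bar>ln (A * exp (- \<mu> * \<sigma> powr b))\<bar>) powr \<alpha>"
  have "0 < r * (2 / \<mu>) powr \<alpha>" using assms by simp
  with c(1) have "0 < c" by linarith
  have "1 \<le> D" unfolding D_def using \<open>0 < \<alpha>\<close> by (intro ge_one_powr_ge_zero) auto
  have "ln (A * exp (- \<mu> * \<sigma> powr b)) < 0" using assms(5,6) by simp
  moreover have "ln (A * exp (- \<mu> * \<sigma> powr b)) = ln A - \<mu> * \<sigma> powr b"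
    using \<open>1 \<le> A\<close> by (simp add: ln_mult)
  ultimately have abs_ln: "\<bar>ln (A * exp (- \<mu> * \<sigma> powr b))\<bar> = \<mu> * \<sigma> powr b - ln A" by simp
  show ?thesis
  proof (cases "2 * ln A \<le> \<mu> * \<sigma> powr b")
    \<comment> \<open>Far out the logarithm is at least \<open>\<mu> \<sigma>\<^sup>b / 2\<close>, so the weight decays like \<open>\<sigma>\<^sup>-\<^sup>b\<^sup>\<alpha> \<le> \<sigma>\<^sup>b\<^sup>-\<^sup>1\<close>.\<close>
    case True
    then have "(\<mu> * \<sigma> powr b / 2) powr \<alpha> \<le> D"
      unfolding D_def abs_ln using assms by (intro powr_mono2) auto
    moreover have "(\<mu> * \<sigma> powr b / 2) powr \<alpha> = (\<mu> / 2) powr \<alpha> * \<sigma> powr (b * \<alpha>)"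
      using assms by (simp add: powr_mult powr_divide powr_powr)
    moreover have "0 < (\<mu> / 2) powr \<alpha> * \<sigma> powr (b * \<alpha>)" using assms by simp
    ultimately have "r / D \<le> r / ((\<mu> / 2) powr \<alpha> * \<sigma> powr (b * \<alpha>))"
      using \<open>0 < r\<close> by (intro divide_left_mono) auto
    also have "\<dots> = r * (2 / \<mu>) powr \<alpha> * \<sigma> powr (- (b * \<alpha>))"
      using assms by (simp add: powr_minus powr_divide divide_simps)
    also have "\<dots> \<le> c * \<sigma> powr (b - 1)"
      using assms \<open>0 < c\<close> by (intro mult_mono powr_mono) (auto simp: algebra_simps)
    finally show ?thesis by (simp add: D_def)
  next
    \<comment> \<open>On the remaining bounded range of \<open>\<sigma>\<close> the weight is at most \<open>r\<close>.\<close>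
    case False
    define S where "S = max ((2 * ln A / \<mu>) powr (1 / b)) 1"
    have "\<sigma> = (\<sigma> powr b) powr (1 / b)" using assms by (simp add: powr_powr)
    also have "\<dots> < (2 * ln A / \<mu>) powr (1 / b)"
      using False assms by (intro powr_less_mono2) (auto simp: less_divide_eq mult.commute)
    also have "\<dots> \<le> S" by (simp add: S_def)
    finally have "\<sigma> < S" .
    have "1 \<le> S" by (simp add: S_def)
    then have "S powr (1 - b) * S powr (b - 1) = 1" by (simp add: powr_add[symmetric])
    moreover have "S powr (b - 1) \<le> \<sigma> powr (b - 1)"
      using \<open>\<sigma> < S\<close> assms by (intro powr_mono2') auto
    then have "r * S powr (1 - b) * S powr (b - 1) \<le> c * \<sigma> powr (b - 1)"
      using c(2) \<open>0 < c\<close> unfolding S_def[symmetric] by (intro mult_mono) auto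
    ultimately have "r \<le> c * \<sigma> powr (b - 1)" by (simp add: mult.assoc)
    moreover have "r / D \<le> r / 1" using \<open>1 \<le> D\<close> \<open>0 < r\<close> by (intro divide_left_mono) auto
    ultimately show ?thesis by (simp add: D_def)
  qed
qed

lemma stretched_exp_parabolic_derivatives:
  fixes A \<mu> b c t x :: real
  assumes "c * t < x"
  defines "\<sigma> \<equiv> x - c * t"
  defines "\<phi> \<equiv> A * exp (- \<mu> * \<sigma> powr b)"
  shows "has_parabolic_derivatives (\<lambda>s y. A * exp (- \<mu> * (max (y - c * s) 0) powr b)) t x
    (c * \<mu> * b * \<sigma> powr (b - 1) * \<phi>)
    (\<phi> * (\<mu> * b * \<sigma> powr (b - 1))\<^sup>2 - \<mu> * b * (b - 1) * \<sigma> powr (b - 2) * \<phi>)"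
proof (rule has_parabolic_derivativesI)
  have v: "A * exp (- \<mu> * (max (y - c * s) 0) powr b) = A * exp (- \<mu> * (y - c * s) powr b)"
    if "c * s < y" for s y
    using that by simp
  have "((\<lambda>s. A * exp (- \<mu> * (x - c * s) powr b)) has_real_derivative c * \<mu> * b * \<sigma> powr (b - 1) * \<phi>) (at t)"
    using assms(1) by (auto intro!: derivative_eq_intros simp: \<sigma>_def \<phi>_def algebra_simps)
  moreover have "open {s. c * s < x}" by (intro open_Collect_less continuous_intros)
  ultimately show "((\<lambda>s. A * exp (- \<mu> * (max (x - c * s) 0) powr b)) has_real_derivative
      c * \<mu> * b * \<sigma> powr (b - 1) * \<phi>) (at t)"
    using assms(1) by (elim has_field_derivative_transform_within_open) (auto simp: v)
  define vx where "vx = (\<lambda>y. - \<mu> * b * (y - c * t) powr (b - 1) * (A * exp (- \<mu> * (y - c * t) powr b)))"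
  have "((\<lambda>y. A * exp (- \<mu> * (max (y - c * t) 0) powr b)) has_real_derivative vx y) (at y)"
    if "c * t < y" for y
  proof -
    have "((\<lambda>y. A * exp (- \<mu> * (y - c * t) powr b)) has_real_derivative vx y) (at y)"
      using that unfolding vx_def by (auto intro!: derivative_eq_intros simp: algebra_simps)
    then show ?thesis
      using that by (elim has_field_derivative_transform_within_open[where S = "{c * t <..}"]) (auto simp: v)
  qed
  moreover have "\<forall>\<^sub>F y in nhds x. c * t < y"
    using assms(1) by (intro eventually_nhds_in_open[of "{c * t <..}", simplified]) auto
  ultimately show "\<forall>\<^sub>F y in nhds x.
      ((\<lambda>y. A * exp (- \<mu> * (max (y - c * t) 0) powr b)) has_real_derivative vx y) (at y)"
    by (auto elim: eventually_mono)
  show "(vx has_real_derivative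
      \<phi> * (\<mu> * b * \<sigma> powr (b - 1))\<^sup>2 - \<mu> * b * (b - 1) * \<sigma> powr (b - 2) * \<phi>) (at x)"
    unfolding vx_def using assms(1)
    by (auto intro!: derivative_eq_intros simp: \<sigma>_def \<phi>_def algebra_simps power2_eq_square)
qed

lemma stretched_exp_supersolution_ineq:
  fixes \<sigma> :: real
  assumes "1 \<le> \<sigma>" "0 < b" "b \<le> 1" "0 < \<mu>" "0 \<le> \<phi>"
    and c: "c * \<mu> * b = k + \<mu>\<^sup>2 * b\<^sup>2 + \<mu> * b * (1 - b)"
  shows "k * \<sigma> powr (b - 1) * \<phi>
    \<le> c * \<mu> * b * \<sigma> powr (b - 1) * \<phi> -
      (\<phi> * (\<mu> * b * \<sigma> powr (b - 1))\<^sup>2 - \<mu> * b * (b - 1) * \<sigma> powr (b - 2) * \<phi>)"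
proof -
  define Q where "Q = \<sigma> powr (b - 1)"
  have "0 < Q" "Q \<le> 1" using assms powr_mono[of "b - 1" 0 \<sigma>] by (auto simp: Q_def)
  have "\<sigma> powr (b - 2) \<le> Q" unfolding Q_def using assms by (intro powr_mono) auto
  have "\<phi> * (\<mu> * b * Q)\<^sup>2 \<le> \<mu>\<^sup>2 * b\<^sup>2 * Q * \<phi>"
  proof -
    have "\<mu>\<^sup>2 * b\<^sup>2 * \<phi> * (Q * Q) \<le> \<mu>\<^sup>2 * b\<^sup>2 * \<phi> * (Q * 1)"
      using \<open>0 < Q\<close> \<open>Q \<le> 1\<close> assms by (intro mult_left_mono) auto
    then show ?thesis by (simp add: power2_eq_square algebra_simps)
  qed
  moreover have "- \<mu> * b * (b - 1) * \<sigma> powr (b - 2) * \<phi> \<le> \<mu> * b * (1 - b) * Q * \<phi>"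
  proof -
    have "\<mu> * b * (1 - b) * \<phi> * \<sigma> powr (b - 2) \<le> \<mu> * b * (1 - b) * \<phi> * Q"
      using \<open>\<sigma> powr (b - 2) \<le> Q\<close> assms by (intro mult_left_mono) auto
    then show ?thesis by (simp add: algebra_simps)
  qed
  moreover have "c * \<mu> * b * Q * \<phi> = (k + \<mu>\<^sup>2 * b\<^sup>2 + \<mu> * b * (1 - b)) * Q * \<phi>"
    by (simp only: c)
  ultimately show ?thesis unfolding Q_def by (simp add: algebra_simps power2_eq_square)
qed

lemma stretched_exp_supersolution:
  fixes \<alpha> r b \<mu> A c k :: real
  assumes f_upper: "\<And>s. 0 < s \<Longrightarrow> s < 1 \<Longrightarrow> f s \<le> r * s / (1 + \<bar>ln s\<bar>) powr \<alpha>"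
    and "0 < \<alpha>" "0 < r" and b: "0 < b" "b \<le> 1" "1 \<le> b * (1 + \<alpha>)" and "0 < \<mu>" "1 \<le> A"
    and k: "r * (2 / \<mu>) powr \<alpha> \<le> k" "r * (max ((2 * ln A / \<mu>) powr (1 / b)) 1) powr (1 - b) \<le> k"
    and c: "c * \<mu> * b = k + \<mu>\<^sup>2 * b\<^sup>2 + \<mu> * b * (1 - b)"
    and "1 < x - c * t" and small: "A * exp (- \<mu> * (x - c * t) powr b) < 1"
  shows "\<exists>vt vxx. has_parabolic_derivatives (\<lambda>t x. A * exp (- \<mu> * (max (x - c * t) 0) powr b)) t x vt vxx
    \<and> f (A * exp (- \<mu> * (max (x - c * t) 0) powr b)) \<le> vt - vxx"
proof -
  define \<sigma> where "\<sigma> = x - c * t"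
  define \<phi> where "\<phi> = A * exp (- \<mu> * \<sigma> powr b)"
  have v: "A * exp (- \<mu> * (max (x - c * t) 0) powr b) = \<phi>"
    using \<open>1 < x - c * t\<close> by (simp add: \<phi>_def \<sigma>_def)
  have "1 < \<sigma>" "0 < \<phi>" "\<phi> < 1" using \<open>1 < x - c * t\<close> \<open>1 \<le> A\<close> small by (auto simp: \<phi>_def \<sigma>_def)
  have "f \<phi> \<le> \<phi> * (r / (1 + \<bar>ln \<phi>\<bar>) powr \<alpha>)"
    using f_upper[OF \<open>0 < \<phi>\<close> \<open>\<phi> < 1\<close>] by (simp add: mult.commute)
  also have "\<dots> \<le> \<phi> * (k * \<sigma> powr (b - 1))"
  proof (rule mult_left_mono)
    show "r / (1 + \<bar>ln \<phi>\<bar>) powr \<alpha> \<le> k * \<sigma> powr (b - 1)"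
      unfolding \<phi>_def
      by (rule log_weight_le_stretched_exp)
        (use \<open>1 < \<sigma>\<close> \<open>\<phi> < 1\<close> assms in \<open>auto simp: \<phi>_def\<close>)
  qed (use \<open>0 < \<phi>\<close> in simp)
  also have "\<dots> \<le> c * \<mu> * b * \<sigma> powr (b - 1) * \<phi> -
      (\<phi> * (\<mu> * b * \<sigma> powr (b - 1))\<^sup>2 - \<mu> * b * (b - 1) * \<sigma> powr (b - 2) * \<phi>)"
    using stretched_exp_supersolution_ineq[OF _ b(1,2) \<open>0 < \<mu>\<close> _ c] \<open>1 < \<sigma>\<close> \<open>0 < \<phi>\<close>
    by (simp add: mult.commute mult.left_commute)
  finally have "f \<phi> \<le> c * \<mu> * b * \<sigma> powr (b - 1) * \<phi> -
      (\<phi> * (\<mu> * b * \<sigma> powr (b - 1))\<^sup>2 - \<mu> * b * (b - 1) * \<sigma> powr (b - 2) * \<phi>)" .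
  moreover have "has_parabolic_derivatives (\<lambda>t x. A * exp (- \<mu> * (max (x - c * t) 0) powr b)) t x
      (c * \<mu> * b * \<sigma> powr (b - 1) * \<phi>)
      (\<phi> * (\<mu> * b * \<sigma> powr (b - 1))\<^sup>2 - \<mu> * b * (b - 1) * \<sigma> powr (b - 2) * \<phi>)"
    unfolding \<sigma>_def \<phi>_def
    by (rule stretched_exp_parabolic_derivatives) (use \<open>1 < \<sigma>\<close> in \<open>simp add: \<sigma>_def\<close>)
  ultimately show ?thesis unfolding v by blast
qed

lemma stretched_exp_ge_solution:
  fixes \<alpha> r b \<mu> A c k :: real
  assumes lip: "\<And>a b. 0 \<le> b \<Longrightarrow> b \<le> a \<Longrightarrow> a \<le> 1 \<Longrightarrow> f a - f b \<le> M * (a - b)"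
    and "0 \<le> M" and sol: "is_solution f u0 u"
    and f_upper: "\<And>s. 0 < s \<Longrightarrow> s < 1 \<Longrightarrow> f s \<le> r * s / (1 + \<bar>ln s\<bar>) powr \<alpha>"
    and "0 < \<alpha>" "0 < r" and b: "0 < b" "b \<le> 1" "1 \<le> b * (1 + \<alpha>)" and "0 < \<mu>"
    and "exp \<mu> \<le> A" and init: "\<And>x. u0 x \<le> A * exp (- \<mu> * (max x 0) powr b)"
    and k: "r * (2 / \<mu>) powr \<alpha> \<le> k" "r * (max ((2 * ln A / \<mu>) powr (1 / b)) 1) powr (1 - b) \<le> k"
    and c: "c * \<mu> * b = k + \<mu>\<^sup>2 * b\<^sup>2 + \<mu> * b * (1 - b)"
    and "0 \<le> t"
  shows "u t x \<le> A * exp (- \<mu> * (max (x - c * t) 0) powr b)"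
proof (rule supersolution_ge_solution[OF lip \<open>0 \<le> M\<close> sol _ _ _ _ \<open>0 \<le> t\<close>])
  have "1 \<le> A" using \<open>exp \<mu> \<le> A\<close> \<open>0 < \<mu>\<close> by (meson less_imp_le one_le_exp_iff order_trans)
  have "continuous_on UNIV (\<lambda>s::real. (max s 0) powr b)"
    using b by (intro continuous_on_powr' continuous_intros) auto
  moreover have "continuous_on ({0..} \<times> UNIV) (\<lambda>p::real \<times> real. snd p - c * fst p)"
    by (intro continuous_intros)
  ultimately have g: "continuous_on ({0..} \<times> UNIV) (\<lambda>p::real \<times> real. (max (snd p - c * fst p) 0) powr b)"
    by (rule continuous_on_compose2) auto
  show "continuous_on ({0..} \<times> UNIV) (\<lambda>(t, x). A * exp (- \<mu> * (max (x - c * t) 0) powr b))"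
    unfolding case_prod_beta' by (intro continuous_on_mult_left continuous_on_exp g)
  show "0 \<le> A * exp (- \<mu> * (max (x - c * t) 0) powr b)" for t x using \<open>1 \<le> A\<close> by simp
  show "u0 x \<le> A * exp (- \<mu> * (max (x - c * 0) 0) powr b)" for x using init by simp
  show "\<exists>vt vxx. has_parabolic_derivatives (\<lambda>t x. A * exp (- \<mu> * (max (x - c * t) 0) powr b)) t x vt vxx
      \<and> f (A * exp (- \<mu> * (max (x - c * t) 0) powr b)) \<le> vt - vxx"
    if "0 < t" and below: "A * exp (- \<mu> * (max (x - c * t) 0) powr b) < u t x" for t x
  proof (rule stretched_exp_supersolution[OF f_upper \<open>0 < \<alpha>\<close> \<open>0 < r\<close> b \<open>0 < \<mu>\<close> \<open>1 \<le> A\<close> k c])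
    have "u t x \<le> 1" using sol \<open>0 < t\<close> by (simp add: is_solution_def)
    \<comment> \<open>For \<open>s \<le> 1\<close> the profile is at least \<open>A e\<^sup>-\<^sup>\<mu> \<ge> 1\<close>, so contact can only occur where \<open>s > 1\<close>.\<close>
    have "1 \<le> A * exp (- \<mu> * (max s 0) powr b)" if "s \<le> 1" for s
    proof -
      have "(max s 0) powr b \<le> 1" using powr_mono2[of b "max s 0" 1] that b by simp
      then have "exp (- \<mu>) \<le> exp (- \<mu> * (max s 0) powr b)" using \<open>0 < \<mu>\<close> by simp
      then have "exp \<mu> * exp (- \<mu>) \<le> A * exp (- \<mu> * (max s 0) powr b)"
        using \<open>exp \<mu> \<le> A\<close> \<open>1 \<le> A\<close> by (intro mult_mono) auto
      then show ?thesis by (simp add: exp_minus)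
    qed
    then show "1 < x - c * t" using below \<open>u t x \<le> 1\<close> by (meson le_less_trans linorder_not_le)
    then show "A * exp (- \<mu> * (x - c * t) powr b) < 1" using below \<open>u t x \<le> 1\<close> by simp
  qed
qed

lemma stretched_exp_dominates_initial:
  fixes \<mu> b \<beta> :: real
  assumes "0 < \<mu>" "0 < b" "b \<le> \<beta>" and le_1: "\<And>x. u0 x \<le> 1"
    and decay: "\<And>x. x0 \<le> x \<Longrightarrow> u0 x \<le> C * exp (- \<mu> * x powr \<beta>)"
  obtains A where "exp \<mu> \<le> A" "\<And>x. u0 x \<le> A * exp (- \<mu> * (max x 0) powr b)"
proof
  define x1 where "x1 = max x0 1"
  define A where "A = max C (exp (\<mu> * x1 powr b))"
  have "1 \<le> x1 powr b" using assms by (intro ge_one_powr_ge_zero) (auto simp: x1_def)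
  then show "exp \<mu> \<le> A" using \<open>0 < \<mu>\<close> by (simp add: A_def le_max_iff_disj)
  then have "1 \<le> A" using \<open>0 < \<mu>\<close> by (meson less_imp_le one_le_exp_iff order_trans)
  show "u0 x \<le> A * exp (- \<mu> * (max x 0) powr b)" for x
  proof (cases "x \<le> x1")
    case True
    then have "(max x 0) powr b \<le> x1 powr b" using assms by (intro powr_mono2) (auto simp: x1_def)
    then have "exp (- \<mu> * x1 powr b) \<le> exp (- \<mu> * (max x 0) powr b)"
      using \<open>0 < \<mu>\<close> by simp
    moreover have "exp (\<mu> * x1 powr b) \<le> A" by (simp add: A_def)
    ultimately have "exp (\<mu> * x1 powr b) * exp (- \<mu> * x1 powr b) \<le> A * exp (- \<mu> * (max x 0) powr b)"
      using \<open>1 \<le> A\<close> by (intro mult_mono) auto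
    with le_1[of x] show ?thesis by (simp add: exp_minus)
  next
    case False
    then have "x0 \<le> x" "1 \<le> x" by (auto simp: x1_def)
    then have "exp (- \<mu> * x powr \<beta>) \<le> exp (- \<mu> * x powr b)"
      using assms by (simp add: powr_mono)
    then have "C * exp (- \<mu> * x powr \<beta>) \<le> A * exp (- \<mu> * x powr b)"
      using \<open>1 \<le> A\<close> by (intro mult_mono) (auto simp: A_def)
    then show ?thesis using decay[OF \<open>x0 \<le> x\<close>] \<open>1 \<le> x\<close> by simp
  qed
qed

lemma spreading_upper_bound:
  fixes \<alpha> r \<beta> \<mu> :: real
  assumes lip: "\<And>a b. 0 \<le> b \<Longrightarrow> b \<le> a \<Longrightarrow> a \<le> 1 \<Longrightarrow> f a - f b \<le> M * (a - b)"
    and "0 \<le> M" and sol: "is_solution f u0 u"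
    and f_upper: "\<And>s. 0 < s \<Longrightarrow> s < 1 \<Longrightarrow> f s \<le> r * s / (1 + \<bar>ln s\<bar>) powr \<alpha>"
    and "0 < \<alpha>" "0 < r" and \<beta>: "0 < \<beta>" "1 / (\<alpha> + 1) \<le> \<beta>" and "0 < \<mu>"
    and decay: "\<And>x. x0 \<le> x \<Longrightarrow> u0 x \<le> C * exp (- \<mu> * x powr \<beta>)"
    and "0 < lv"
  obtains c S where "0 < c" "\<And>t x. 0 \<le> t \<Longrightarrow> lv \<le> u t x \<Longrightarrow> x \<le> c * t + S"
proof -
  define b where "b = min \<beta> 1"
  have b: "0 < b" "b \<le> 1" "b \<le> \<beta>" using \<beta> by (auto simp: b_def)
  have "1 \<le> b * (1 + \<alpha>)"
    using \<beta> \<open>0 < \<alpha>\<close> by (auto simp: b_def min_def field_simps)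
  have "u0 x \<le> 1" for x using sol by (metis is_solution_def order_refl)
  then obtain A where "exp \<mu> \<le> A" and init: "\<And>x. u0 x \<le> A * exp (- \<mu> * (max x 0) powr b)"
    using stretched_exp_dominates_initial[OF \<open>0 < \<mu>\<close> b(1,3) _ decay] by blast
  then have "1 \<le> A" using \<open>0 < \<mu>\<close> by (meson less_imp_le one_le_exp_iff order_trans)
  define k where "k = max (r * (2 / \<mu>) powr \<alpha>) (r * (max ((2 * ln A / \<mu>) powr (1 / b)) 1) powr (1 - b))"
  define c where "c = (k + \<mu>\<^sup>2 * b\<^sup>2 + \<mu> * b * (1 - b)) / (\<mu> * b)"
  have "c * \<mu> * b = k + \<mu>\<^sup>2 * b\<^sup>2 + \<mu> * b * (1 - b)" using b \<open>0 < \<mu>\<close> by (simp add: c_def)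
  then have above: "u t x \<le> A * exp (- \<mu> * (max (x - c * t) 0) powr b)" if "0 \<le> t" for t x
    by (intro stretched_exp_ge_solution[OF lip \<open>0 \<le> M\<close> sol f_upper \<open>0 < \<alpha>\<close> \<open>0 < r\<close> b(1,2)
          \<open>1 \<le> b * (1 + \<alpha>)\<close> \<open>0 < \<mu>\<close> \<open>exp \<mu> \<le> A\<close> init _ _ _ that]) (simp_all add: k_def)
  have "0 < k" using \<open>0 < r\<close> \<open>0 < \<mu>\<close> by (simp add: k_def less_max_iff_disj)
  then have "0 < c" using b \<open>0 < \<mu>\<close> by (simp add: c_def add_pos_nonneg)
  show thesis
  proof (rule that[OF \<open>0 < c\<close>])
    fix t x assume "0 \<le> t" "lv \<le> u t x"
    show "x \<le> c * t + (ln (A / lv) / \<mu>) powr (1 / b)"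
    proof (cases "x - c * t \<le> 0")
      case False
      define \<sigma> where "\<sigma> = x - c * t"
      have "lv \<le> A * exp (- \<mu> * \<sigma> powr b)"
        using above[OF \<open>0 \<le> t\<close>, of x] \<open>lv \<le> u t x\<close> False by (simp add: \<sigma>_def)
      then have "ln lv \<le> ln (A * exp (- \<mu> * \<sigma> powr b))"
        using \<open>0 < lv\<close> by simp
      also have "\<dots> = ln A - \<mu> * \<sigma> powr b" using \<open>1 \<le> A\<close> by (simp add: ln_mult)
      finally have "\<sigma> powr b \<le> ln (A / lv) / \<mu>"
        using \<open>0 < lv\<close> \<open>1 \<le> A\<close> \<open>0 < \<mu>\<close> by (simp add: ln_div field_simps)
      then have "(\<sigma> powr b) powr (1 / b) \<le> (ln (A / lv) / \<mu>) powr (1 / b)"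
        using b by (intro powr_mono2) auto
      then show ?thesis using b False by (simp add: \<sigma>_def powr_powr)
    qed (use powr_ge_zero[of "ln (A / lv) / \<mu>" "1 / b"] in linarith)
  qed
qed

section \<open>Linear spreading\<close>

lemma C1_on_unit_continuous: "C1_on_unit f f' \<Longrightarrow> continuous_on {0..1} f"
  unfolding C1_on_unit_def by (meson DERIV_continuous_on)

lemma C1_on_unit_lipschitz:
  assumes "C1_on_unit f f'"
  obtains M where "0 \<le> M" "\<And>a b. 0 \<le> b \<Longrightarrow> b \<le> a \<Longrightarrow> a \<le> 1 \<Longrightarrow> f a - f b \<le> M * (a - b)"
proof -
  have f': "\<And>s. s \<in> {0..1} \<Longrightarrow> (f has_real_derivative f' s) (at s within {0..1})"
    and "continuous_on {0..1} f'"
    using assms unfolding C1_on_unit_def by auto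
  then have "bounded (f' ` {0..1})" by (intro compact_imp_bounded compact_continuous_image) auto
  then obtain M where M: "\<And>s. s \<in> {0..1} \<Longrightarrow> norm (f' s) \<le> M"
    unfolding bounded_iff by blast
  show thesis
  proof (rule that)
    show "0 \<le> M" using M[of 0] by simp
    fix a b :: real assume "0 \<le> b" "b \<le> a" "a \<le> 1"
    then have "norm (f a - f b) \<le> M * norm (a - b)"
      by (intro field_differentiable_bound[OF convex_real_interval(5) f' M]) auto
    then show "f a - f b \<le> M * (a - b)" using \<open>b \<le> a\<close> by simp
  qed
qed

lemma level_pos_bounds:
  assumes x: "x \<in> upper_level_set u lv t" and bound: "upper_level_set u lv t \<subseteq> {..B}"
  shows "upper_level_set u lv t \<noteq> {}" "bdd_above (upper_level_set u lv t)"
    and "x \<le> level_pos u lv t" "level_pos u lv t \<le> B"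
proof -
  show "upper_level_set u lv t \<noteq> {}" using x by auto
  show bdd: "bdd_above (upper_level_set u lv t)" using bound by (rule bdd_above_mono[OF bdd_above_Iic])
  show "x \<le> level_pos u lv t" unfolding level_pos_def using x bdd by (rule cSup_upper)
  show "level_pos u lv t \<le> B" unfolding level_pos_def using x bound by (intro cSup_least) auto
qed

lemma level_pos_linear_bounds:
  assumes "0 < \<Gamma>" "0 < c"
    and ahead: "\<And>t. T < t \<Longrightarrow> \<exists>x. lv \<le> u t x \<and> \<Gamma> * t < x"
    and behind: "\<And>t x. 0 \<le> t \<Longrightarrow> lv \<le> u t x \<Longrightarrow> x \<le> c * t + S"
  shows "\<exists>\<Gamma>>0. \<exists>c>0. \<exists>T. \<forall>t>T.
    upper_level_set u lv t \<noteq> {} \<and> bdd_above (upper_level_set u lv t) \<and>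
    \<Gamma> < level_pos u lv t / t \<and> level_pos u lv t / t < c"
proof -
  have "\<forall>t > max T (\<bar>S\<bar> / c). upper_level_set u lv t \<noteq> {} \<and> bdd_above (upper_level_set u lv t) \<and>
      \<Gamma> < level_pos u lv t / t \<and> level_pos u lv t / t < 2 * c"
  proof (intro allI impI)
    fix t assume "max T (\<bar>S\<bar> / c) < t"
    moreover have "0 \<le> \<bar>S\<bar> / c" using \<open>0 < c\<close> by simp
    ultimately have "T < t" "0 < t" by linarith+
    have "S < c * t" using \<open>max T (\<bar>S\<bar> / c) < t\<close> \<open>0 < c\<close> by (auto simp: field_simps abs_less_iff)
    obtain x where "lv \<le> u t x" "\<Gamma> * t < x" using ahead[OF \<open>T < t\<close>] by blast
    then have "x \<in> upper_level_set u lv t" by (simp add: upper_level_set_def)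
    moreover have "upper_level_set u lv t \<subseteq> {..c * t + S}"
      using behind \<open>0 < t\<close> by (auto simp: upper_level_set_def)
    ultimately have ne: "upper_level_set u lv t \<noteq> {}" and bdd: "bdd_above (upper_level_set u lv t)"
      and level: "x \<le> level_pos u lv t" "level_pos u lv t \<le> c * t + S"
      by (rule level_pos_bounds)+
    have "\<Gamma> * t < level_pos u lv t" "level_pos u lv t < 2 * c * t"
      using level \<open>\<Gamma> * t < x\<close> \<open>S < c * t\<close> by linarith+
    with ne bdd \<open>0 < t\<close> show "upper_level_set u lv t \<noteq> {} \<and> bdd_above (upper_level_set u lv t) \<and>
        \<Gamma> < level_pos u lv t / t \<and> level_pos u lv t / t < 2 * c"
      by (simp add: less_divide_eq divide_less_eq)
  qed
  then show ?thesis
    by (intro exI[of _ \<Gamma>] exI[of _ "2 * c"] exI[of _ "max T (\<bar>S\<bar> / c)"] conjI)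
      (use assms in simp_all)
qed

theorem theorem1p1:
  fixes f f' u0 :: "real \<Rightarrow> real" and u :: "real \<Rightarrow> real \<Rightarrow> real"
    and s0 K \<alpha> r \<beta> x0 \<mu> :: real
  assumes f_C1: "C1_on_unit f f'"
    and f0: "f 0 = 0" and f1: "f 1 = 0"
    and fpos: "\<forall>s. 0 < s \<and> s < 1 \<longrightarrow> f s > 0"
    and fder1: "f' 1 < 0"
    and s0: "0 < s0" "s0 < 1" and K: "K \<ge> 0" and alpha: "\<alpha> > 0" and r: "r > 0"
    and f_upper: "\<forall>s. 0 < s \<and> s < 1 \<longrightarrow> f s \<le> r * s / (1 + \<bar>ln s\<bar>) powr \<alpha>"
    and f_lower: "\<forall>s. 0 < s \<and> s \<le> s0 \<longrightarrow> f s \<ge> r * s / (1 + \<bar>ln s\<bar>) powr \<alpha> * (1 - K * s)"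
    and u0_uc: "uniformly_continuous_on UNIV u0"
    and u0_range: "\<forall>x. 0 \<le> u0 x \<and> u0 x \<le> 1"
    and u0_pos: "\<forall>x. u0 x > 0"
    and u0_left: "\<exists>\<delta>>0. eventually (\<lambda>x. u0 x \<ge> \<delta>) at_bot"
    and u0_right: "(u0 \<longlongrightarrow> 0) at_top"
    and beta: "\<beta> > 0" "\<beta> \<ge> 1 / (\<alpha> + 1)"
    and x0: "x0 > 0" and mu: "\<mu> > 0"
    and u0_decay: "\<exists>C>0. \<forall>x\<ge>x0. u0 x \<le> C * exp (- \<mu> * x powr \<beta>)"
    and sol: "is_solution f u0 u"
  shows "\<forall>lv. 0 < lv \<and> lv < 1 \<longrightarrow>
           (\<exists>\<Gamma>>0. \<exists>c>0. \<exists>T. \<forall>t>T.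
              upper_level_set u lv t \<noteq> {} \<and> bdd_above (upper_level_set u lv t) \<and>
              \<Gamma> < level_pos u lv t / t \<and> level_pos u lv t / t < c)"
proof (intro allI impI)
  fix lv :: real assume lv: "0 < lv \<and> lv < 1"
  obtain M where "0 \<le> M" and lip: "\<And>a b. 0 \<le> b \<Longrightarrow> b \<le> a \<Longrightarrow> a \<le> 1 \<Longrightarrow> f a - f b \<le> M * (a - b)"
    using C1_on_unit_lipschitz[OF f_C1] by blast
  have f_nonneg: "0 \<le> f s" if "0 \<le> s" "s \<le> 1" for s
    using that fpos f0 f1 by (cases "s = 0 \<or> s = 1") (auto simp: less_imp_le)
  obtain \<delta> l where "0 < \<delta>" "\<And>x. x \<le> l \<Longrightarrow> \<delta> \<le> u0 x"
    using u0_left unfolding eventually_at_bot_linorder by blast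
  then obtain \<Gamma> T where "0 < \<Gamma>" and ahead: "\<And>t. T < t \<Longrightarrow> \<exists>x. lv \<le> u t x \<and> \<Gamma> * t < x"
    using spreading_lower_bound[OF lip \<open>0 \<le> M\<close> sol C1_on_unit_continuous[OF f_C1] f_nonneg] fpos lv
    by blast
  obtain C where "\<And>x. x0 \<le> x \<Longrightarrow> u0 x \<le> C * exp (- \<mu> * x powr \<beta>)" using u0_decay by blast
  then obtain c S where "0 < c" and behind: "\<And>t x. 0 \<le> t \<Longrightarrow> lv \<le> u t x \<Longrightarrow> x \<le> c * t + S"
    using spreading_upper_bound[OF lip \<open>0 \<le> M\<close> sol _ alpha r beta mu] f_upper lv by blast
  show "\<exists>\<Gamma>>0. \<exists>c>0. \<exists>T. \<forall>t>T.
      upper_level_set u lv t \<noteq> {} \<and> bdd_above (upper_level_set u lv t) \<and>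
      \<Gamma> < level_pos u lv t / t \<and> level_pos u lv t / t < c"
    by (rule level_pos_linear_bounds[OF \<open>0 < \<Gamma>\<close> \<open>0 < c\<close> ahead behind])
qed

end
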